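(* Let $D\ge3$ be an integer, $k\in\{1,0,-1\}$, $\Omega_{k,D-1}>0$, $\alpha^2=\frac{2(D-2)}{D-1}$, and fix temperatures $0<T_{\rm c}<T_{\rm h}$ and volumes $0<V_1<V_2$. Set $T_1\equiv T_{\rm c}$, $T_2\equiv T_{\rm h}$ and, for $i,j\in\{1,2\}$ and electric potential $\tilde\Phi>0$, $$\xi_{ij}=\frac{1}{2^{D-1}}\left[1+\sqrt{1+D(D-2)\left(\frac{\alpha^2\tilde\Phi^2}{4\pi^2T_i^2}-\frac{k}{4\pi^2T_i^2}\left(\frac{\Omega_{k,D-1}}{V_j}\right)^{\frac{2}{D-1}}\right)}\right]^{D-1},$$ $$\chi_{ij}=\xi_{ij}^{\frac{D-2}{D-1}}\left[\xi_{ij}^{\frac{2}{D-1}}+\frac{D^2}{16\pi^2T_i^2}\left(k\left(\frac{\Omega_{k,D-1}}{V_j}\right)^{\frac{2}{D-1}}-\alpha^2\tilde\Phi^2\right)\right].$$ Define $$\eta_{\rm non\text{-}regen}(\tilde\Phi)=1-\frac{T_{\rm c}^D(V_2\xi_{12}-V_1\xi_{11})+\frac{D-1}{D}V_2(T_{\rm h}^D\chi_{22}-T_{\rm c}^D\chi_{12})}{T_{\rm h}^D(V_2\xi_{22}-V_1\xi_{21})+\frac{D-1}{D}V_1(T_{\rm h}^D\chi_{21}-T_{\rm c}^D\chi_{11})},$$ $$\eta_{\rm regen}(\tilde\Phi)=1-\frac{T_{\rm c}^D(V_2\xi_{12}-V_1\xi_{11})+\frac{D-1}{D}\left[V_2(T_{\rm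 h}^D\chi_{22}-T_{\rm c}^D\chi_{12})-V_1(T_{\rm h}^D\chi_{21}-T_{\rm c}^D\chi_{11})\right]}{T_{\rm h}^D(V_2\xi_{22}-V_1\xi_{21})}.$$ Then, as $\tilde\Phi\to\infty$ (with $T_{\rm c},T_{\rm h},V_1,V_2$ fixed), both $\eta_{\rm non\text{-}regen}(\tilde\Phi)=1-\frac{T_{\rm c}}{T_{\rm h}}+\mathcal{O}(\tilde\Phi^{-1})$ and $\eta_{\rm regen}(\tilde\Phi)=1-\frac{T_{\rm c}}{T_{\rm h}}+\mathcal{O}(\tilde\Phi^{-1})$; in particular both tend to the Carnot efficiency $1-T_{\rm c}/T_{\rm h}$.
   Context: These are the Stirling efficiencies (without and with an ideal regenerator) of a thermal state of a $D$-dimensional holographic CFT on a constant-curvature spatial manifold of volume $V=\Omega_{k,D-1}R^{D-1}$ in the grand canonical (fixed electric potential $\tilde\Phi$) ensemble, dual to a $(D+1)$-dimensional AdS-Reissner-Nordström black hole (large, positive heat capacity branch); $k=1,0,-1$ labels spherical, planar, hyperbolic geometry. The cycle has hot isotherm at $T_{\rm h}$, cold isotherm at $T_{\rm c}$, and isochores at volumes $V_1<V_2$, with $\tilde\Phi$ held fixed throughout. *)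

theory Defs
  imports "HOL-Analysis.Analysis" "HOL-Library.Landau_Symbols"
begin

definition alpha2 :: "nat \<Rightarrow> real" where
  "alpha2 D = 2 * (real D - 2) / (real D - 1)"

definition xi :: "nat \<Rightarrow> real \<Rightarrow> real \<Rightarrow> real \<Rightarrow> real \<Rightarrow> real \<Rightarrow> real" where
  "xi D k Om T V Phi =
     (1 / 2 ^ (D - 1)) *
     (1 + sqrt (1 + real D * (real D - 2) *
        (alpha2 D * Phi\<^sup>2 / (4 * pi\<^sup>2 * T\<^sup>2)
         - k / (4 * pi\<^sup>2 * T\<^sup>2) * (Om / V) powr (2 / (real D - 1))))) ^ (D - 1)"

definition chi :: "nat \<Rightarrow> real \<Rightarrow> real \<Rightarrow> real \<Rightarrow> real \<Rightarrow> real \<Rightarrow> real" where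
  "chi D k Om T V Phi =
     (xi D k Om T V Phi) powr ((real D - 2) / (real D - 1)) *
     ((xi D k Om T V Phi) powr (2 / (real D - 1))
      + (real D)\<^sup>2 / (16 * pi\<^sup>2 * T\<^sup>2) *
        (k * (Om / V) powr (2 / (real D - 1)) - alpha2 D * Phi\<^sup>2))"

definition eta_nonregen ::
  "nat \<Rightarrow> real \<Rightarrow> real \<Rightarrow> real \<Rightarrow> real \<Rightarrow> real \<Rightarrow> real \<Rightarrow> real \<Rightarrow> real" where
  "eta_nonregen D k Om Tc Th V1 V2 Phi =
     (let x11 = xi D k Om Tc V1 Phi; x12 = xi D k Om Tc V2 Phi;
          x21 = xi D k Om Th V1 Phi; x22 = xi D k Om Th V2 Phi;
          c11 = chi D k Om Tc V1 Phi; c12 = chi D k Om Tc V2 Phi;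
          c21 = chi D k Om Th V1 Phi; c22 = chi D k Om Th V2 Phi
      in 1 - (Tc ^ D * (V2 * x12 - V1 * x11)
               + (real D - 1) / real D * V2 * (Th ^ D * c22 - Tc ^ D * c12))
            / (Th ^ D * (V2 * x22 - V1 * x21)
               + (real D - 1) / real D * V1 * (Th ^ D * c21 - Tc ^ D * c11)))"

definition eta_regen ::
  "nat \<Rightarrow> real \<Rightarrow> real \<Rightarrow> real \<Rightarrow> real \<Rightarrow> real \<Rightarrow> real \<Rightarrow> real \<Rightarrow> real" where
  "eta_regen D k Om Tc Th V1 V2 Phi =
     (let x11 = xi D k Om Tc V1 Phi; x12 = xi D k Om Tc V2 Phi;
          x21 = xi D k Om Th V1 Phi; x22 = xi D k Om Th V2 Phi;
          c11 = chi D k Om Tc V1 Phi; c12 = chi D k Om Tc V2 Phi;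
          c21 = chi D k Om Th V1 Phi; c22 = chi D k Om Th V2 Phi
      in 1 - (Tc ^ D * (V2 * x12 - V1 * x11)
               + (real D - 1) / real D *
                 (V2 * (Th ^ D * c22 - Tc ^ D * c12) - V1 * (Th ^ D * c21 - Tc ^ D * c11)))
            / (Th ^ D * (V2 * x22 - V1 * x21)))"

end

theory Submission
  imports Defs
begin

text \<open>
  Let u be the (D-1)-th root of xi and w = T u. Once the radicand under the square root is
  nonnegative, which holds for all large Phi, chi is a polynomial in u, and one finds
  T^D xi = T w^(D-1) and (D-2) T^D chi = D T w^(D-1) - 2 w^D. The root grows like
  w = y + T/2 + O(1/y), where y = a Phi does not depend on T or V. Hence
  T^D xi = T y^(D-1) + O(y^(D-2)), whereas in (D-2) T^D chi the terms of order y^(D-1) cancel,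
  leaving -2 y^D + O(y^(D-2)) with a leading term independent of T. The chi contributions to the
  efficiencies, which only occur as differences between the hot and the cold isotherm, are
  therefore of lower order. Numerator and denominator are Tc (V2-V1) y^(D-1) and
  Th (V2-V1) y^(D-1) up to O(y^(D-2)), so both efficiencies are 1 - Tc/Th + O(1/Phi).
\<close>

lemma bigo_power_diff:
  fixes y h :: "'a \<Rightarrow> 'b :: real_normed_field"
  assumes "h \<in> O[F](y)"
  shows "(\<lambda>x. (y x + h x) ^ Suc n - y x ^ Suc n) \<in> O[F](\<lambda>x. h x * y x ^ n)"
proof (induction n)
  case 0
  show ?case by simp
next
  case (Suc n)
  have "(\<lambda>x. y x + h x) \<in> O[F](y)"
    using assms by (intro sum_in_bigo) simp_all
  then have "(\<lambda>x. (y x + h x) * ((y x + h x) ^ Suc n - y x ^ Suc n))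
      \<in> O[F](\<lambda>x. y x * (h x * y x ^ n))"
    using Suc.IH by (rule landau_o.big.mult)
  then have "(\<lambda>x. (y x + h x) * ((y x + h x) ^ Suc n - y x ^ Suc n))
      \<in> O[F](\<lambda>x. h x * y x ^ Suc n)"
    by (simp add: ac_simps)
  moreover have "(\<lambda>x. (y x + h x) ^ Suc (Suc n) - y x ^ Suc (Suc n))
      = (\<lambda>x. (y x + h x) * ((y x + h x) ^ Suc n - y x ^ Suc n) + h x * y x ^ Suc n)"
    by (simp add: algebra_simps)
  ultimately show ?case
    by (simp add: sum_in_bigo)
qed

lemma bigo_power_taylor_remainder:
  fixes y h :: "'a \<Rightarrow> 'b :: real_normed_field"
  assumes y: "(\<lambda>_. 1) \<in> O[F](y)" and h: "h \<in> O[F](\<lambda>_. 1)"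
  shows "(\<lambda>x. (y x + h x) ^ (n + 2) - y x ^ (n + 2) - of_nat (n + 2) * h x * y x ^ (n + 1))
           \<in> O[F](\<lambda>x. y x ^ n)"
proof (induction n)
  case 0
  have "(\<lambda>x. h x * h x) \<in> O[F](\<lambda>x. 1 * 1)"
    using h h by (rule landau_o.big.mult)
  then show ?case
    by (simp add: algebra_simps power2_eq_square)
next
  case (Suc n)
  have "(\<lambda>x. y x + h x) \<in> O[F](y)"
    using landau_o.big_trans[OF h y] by (intro sum_in_bigo) simp_all
  then have "(\<lambda>x. (y x + h x)
      * ((y x + h x) ^ (n + 2) - y x ^ (n + 2) - of_nat (n + 2) * h x * y x ^ (n + 1)))
      \<in> O[F](\<lambda>x. y x * y x ^ n)"
    using Suc.IH by (rule landau_o.big.mult)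
  moreover have "(\<lambda>x. h x * h x * y x ^ Suc n) \<in> O[F](\<lambda>x. 1 * 1 * y x ^ Suc n)"
    using h h by (intro landau_o.big.mult_right landau_o.big.mult)
  ultimately have "(\<lambda>x. (y x + h x)
      * ((y x + h x) ^ (n + 2) - y x ^ (n + 2) - of_nat (n + 2) * h x * y x ^ (n + 1))
      + of_nat (n + 2) * (h x * h x * y x ^ Suc n)) \<in> O[F](\<lambda>x. y x ^ Suc n)"
    by (intro sum_in_bigo) simp_all
  moreover have "(\<lambda>x. (y x + h x) ^ (Suc n + 2) - y x ^ (Suc n + 2)
      - of_nat (Suc n + 2) * h x * y x ^ (Suc n + 1))
    = (\<lambda>x. (y x + h x) * ((y x + h x) ^ (n + 2) - y x ^ (n + 2) - of_nat (n + 2) * h x * y x ^ (n + 1))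
      + of_nat (n + 2) * (h x * h x * y x ^ Suc n))"
    by (simp add: algebra_simps)
  ultimately show ?case
    by simp
qed

lemma one_smallo_if_filterlim_at_infinity:
  assumes "filterlim y at_infinity F"
  shows "(\<lambda>_. 1) \<in> o[F](y)"
  using assms by (simp add: smallomega_1_conv_filterlim flip: smallomega_iff_smallo)

lemma bigo_1_if_mult_bigo_1:
  fixes y e :: "'a \<Rightarrow> 'b :: real_normed_field"
  assumes y: "filterlim y at_infinity F" and e: "(\<lambda>x. e x * y x) \<in> O[F](\<lambda>_. 1)"
  shows "e \<in> O[F](\<lambda>_. 1)"
proof -
  have "(\<lambda>x. inverse (y x)) \<in> O[F](\<lambda>_. inverse 1)"
    using filterlim_at_infinity_imp_eventually_ne[OF y, of 0]
      landau_o.small_imp_big[OF one_smallo_if_filterlim_at_infinity[OF y]]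
    by (intro landau_o.big.inverse) simp_all
  then have "(\<lambda>x. e x * y x * inverse (y x)) \<in> O[F](\<lambda>_. 1 * inverse 1)"
    using e by (rule landau_o.big.mult[rotated])
  moreover have "eventually (\<lambda>x. e x * y x * inverse (y x) = e x) F"
    using filterlim_at_infinity_imp_eventually_ne[OF y, of 0] by eventually_elim simp
  ultimately show ?thesis
    by (simp add: landau_o.big.in_cong)
qed

lemma bigo_shifted_power_diff:
  fixes y e :: "'a \<Rightarrow> 'b :: real_normed_field"
  assumes y: "filterlim y at_infinity F" and e: "(\<lambda>x. e x * y x) \<in> O[F](\<lambda>_. 1)"
  shows "(\<lambda>x. (y x + c + e x) ^ Suc n - y x ^ Suc n) \<in> O[F](\<lambda>x. y x ^ n)"
proof -
  have h: "(\<lambda>x. c + e x) \<in> O[F](\<lambda>_. 1)"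
    using bigo_1_if_mult_bigo_1[OF y e] by (intro sum_in_bigo) simp_all
  have "(\<lambda>x. (y x + (c + e x)) ^ Suc n - y x ^ Suc n) \<in> O[F](\<lambda>x. (c + e x) * y x ^ n)"
    using landau_o.big_trans[OF h landau_o.small_imp_big[OF one_smallo_if_filterlim_at_infinity[OF y]]]
    by (rule bigo_power_diff)
  also have "(\<lambda>x. (c + e x) * y x ^ n) \<in> O[F](\<lambda>x. 1 * y x ^ n)"
    using h by (rule landau_o.big.mult_right)
  finally show ?thesis
    by (simp add: add.assoc)
qed

text \<open>The terms of order y^(n+1) cancel because the shift T/2 is exactly half the coefficient T.\<close>

lemma bigo_power_cancellation:
  fixes y e :: "'a \<Rightarrow> 'b :: real_normed_field"
  assumes y: "filterlim y at_infinity F" and e: "(\<lambda>x. e x * y x) \<in> O[F](\<lambda>_. 1)"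
  shows "(\<lambda>x. of_nat (n + 2) * T * (y x + T / 2 + e x) ^ (n + 1) - 2 * (y x + T / 2 + e x) ^ (n + 2)
            + 2 * y x ^ (n + 2)) \<in> O[F](\<lambda>x. y x ^ n)"
proof -
  have first: "(\<lambda>x. (y x + T / 2 + e x) ^ (n + 1) - y x ^ (n + 1)) \<in> O[F](\<lambda>x. y x ^ n)"
    using bigo_shifted_power_diff[OF y e] by simp
  have "(\<lambda>x. (y x + (T / 2 + e x)) ^ (n + 2) - y x ^ (n + 2)
      - of_nat (n + 2) * (T / 2 + e x) * y x ^ (n + 1))
      \<in> O[F](\<lambda>x. y x ^ n)"
    using landau_o.small_imp_big[OF one_smallo_if_filterlim_at_infinity[OF y]] bigo_1_if_mult_bigo_1[OF y e]
    by (intro bigo_power_taylor_remainder sum_in_bigo) simp_all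
  then have second: "(\<lambda>x. (y x + T / 2 + e x) ^ (n + 2) - y x ^ (n + 2)
      - of_nat (n + 2) * (T / 2 + e x) * y x ^ (n + 1)) \<in> O[F](\<lambda>x. y x ^ n)"
    by (simp add: add.assoc)
  have third: "(\<lambda>x. e x * y x * y x ^ n) \<in> O[F](\<lambda>x. y x ^ n)"
    using landau_o.big.mult_right[OF e] by simp
  have "(\<lambda>x. of_nat (n + 2) * T * (y x + T / 2 + e x) ^ (n + 1) - 2 * (y x + T / 2 + e x) ^ (n + 2)
      + 2 * y x ^ (n + 2))
    = (\<lambda>x. of_nat (n + 2) * T * ((y x + T / 2 + e x) ^ (n + 1) - y x ^ (n + 1))
      - 2 * ((y x + T / 2 + e x) ^ (n + 2) - y x ^ (n + 2) - of_nat (n + 2) * (T / 2 + e x) * y x ^ (n + 1))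
      - 2 * of_nat (n + 2) * (e x * y x * y x ^ n))"
    by (simp add: algebra_simps)
  then show ?thesis
    by (simp only:) (rule sum_in_bigo(2), rule sum_in_bigo(2),
        simp_all only: cmult_in_bigo_iff first second third simp_thms)
qed

lemma bigo_quotient_of_leading_terms:
  fixes N M y :: "'a \<Rightarrow> 'b :: real_normed_field"
  assumes y: "filterlim y at_infinity F" and b: "b \<noteq> 0"
    and N: "(\<lambda>x. N x - a * y x ^ Suc n) \<in> O[F](\<lambda>x. y x ^ n)"
    and M: "(\<lambda>x. M x - b * y x ^ Suc n) \<in> O[F](\<lambda>x. y x ^ n)"
  shows "(\<lambda>x. N x / M x - a / b) \<in> O[F](\<lambda>x. 1 / y x)"
proof -
  have "(\<lambda>x. y x ^ n * 1) \<in> o[F](\<lambda>x. y x ^ n * y x)"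
    using landau_o.big_refl one_smallo_if_filterlim_at_infinity[OF y] by (rule landau_o.big_small_mult)
  then have "(\<lambda>x. y x ^ n) \<in> o[F](\<lambda>x. b * y x ^ Suc n)"
    using b by (simp add: mult.commute)
  then have "M \<sim>[F] (\<lambda>x. b * y x ^ Suc n)"
    by (intro smallo_imp_asymp_equiv landau_o.big_small_trans[OF M])
  then have M_equiv: "(\<lambda>x. inverse (M x)) \<sim>[F] (\<lambda>x. inverse (b * y x ^ Suc n))"
    by (rule asymp_equiv_inverse)
  have "eventually (\<lambda>x. M x \<noteq> 0) F"
    using asymp_equiv_eventually_zeros[OF M_equiv] filterlim_at_infinity_imp_eventually_ne[OF y, of 0]
    by eventually_elim (use b in simp)
  with filterlim_at_infinity_imp_eventually_ne[OF y, of 0]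
  have ev: "eventually (\<lambda>x. N x / M x - a / b = (b * N x - a * M x) * inverse (M x) / b
      \<and> y x ^ n * inverse (b * y x ^ Suc n) = inverse b * (1 / y x)) F"
    by eventually_elim (use b in \<open>simp add: field_simps\<close>)
  have "(\<lambda>x. b * (N x - a * y x ^ Suc n) - a * (M x - b * y x ^ Suc n)) \<in> O[F](\<lambda>x. y x ^ n)"
    by (rule sum_in_bigo(2)) (simp_all only: cmult_in_bigo_iff N M simp_thms)
  then have "(\<lambda>x. b * N x - a * M x) \<in> O[F](\<lambda>x. y x ^ n)"
    by (simp add: algebra_simps)
  then have "(\<lambda>x. (b * N x - a * M x) * inverse (M x))
      \<in> O[F](\<lambda>x. y x ^ n * inverse (b * y x ^ Suc n))"
    using asymp_equiv_imp_bigo[OF M_equiv] by (rule landau_o.big.mult)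
  also have "(\<lambda>x. y x ^ n * inverse (b * y x ^ Suc n)) \<in> \<Theta>[F](\<lambda>x. inverse b * (1 / y x))"
    using ev by (intro bigthetaI_cong) (auto elim: eventually_mono)
  finally have "(\<lambda>x. (b * N x - a * M x) * inverse (M x) / b) \<in> O[F](\<lambda>x. 1 / y x)"
    by (subst (asm) landau_o.big.cmult) (use b in simp_all)
  moreover have "eventually (\<lambda>x. N x / M x - a / b = (b * N x - a * M x) * inverse (M x) / b) F"
    using ev by (rule eventually_mono) simp
  ultimately show ?thesis
    by (simp add: landau_o.big.in_cong)
qed

lemma bigo_tendsto_0:
  fixes f g :: "'a \<Rightarrow> 'b :: real_normed_field"
  assumes "f \<in> O[F](g)" and "(g \<longlongrightarrow> 0) F"
  shows "(f \<longlongrightarrow> 0) F"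
proof -
  have "g \<in> o[F](\<lambda>_. 1)"
    using assms(2) by (intro smalloI_tendsto) simp_all
  with assms(1) have "f \<in> o[F](\<lambda>_. 1)"
    by (rule landau_o.big_small_trans)
  then show ?thesis
    using smalloD_tendsto[of f F "\<lambda>_. 1"] by simp
qed

lemma carnot_deviation_bigo:
  fixes N M :: "real \<Rightarrow> real"
  assumes Th: "Th \<noteq> 0" and K: "K \<noteq> 0"
    and N: "(\<lambda>x. N x - Tc * K * x ^ Suc n) \<in> O(\<lambda>x. x ^ n)"
    and M: "(\<lambda>x. M x - Th * K * x ^ Suc n) \<in> O(\<lambda>x. x ^ n)"
  shows "(\<lambda>x. (1 - N x / M x) - (1 - Tc / Th)) \<in> O(\<lambda>x. 1 / x)"
proof -
  have "(\<lambda>x. N x / M x - Tc * K / (Th * K)) \<in> O(\<lambda>x. 1 / x)"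
    using filterlim_at_top_imp_at_infinity[OF filterlim_ident] _ N M
    by (rule bigo_quotient_of_leading_terms) (use Th K in simp)
  then have "(\<lambda>x. - (N x / M x - Tc * K / (Th * K))) \<in> O(\<lambda>x. 1 / x)"
    by (simp only: landau_o.big.uminus_in_iff)
  then show ?thesis
    using K by simp
qed

lemma eventually_square_plus_const_nonneg:
  fixes a c :: real
  assumes "a \<noteq> 0"
  shows "eventually (\<lambda>x. (a * x)\<^sup>2 + c \<ge> 0) at_top"
  using eventually_ge_at_top[of "sqrt \<bar>c\<bar> / \<bar>a\<bar>"]
proof eventually_elim
  case (elim x)
  moreover have "sqrt \<bar>c\<bar> / \<bar>a\<bar> \<ge> 0"
    by simp
  ultimately have "sqrt \<bar>c\<bar> \<le> \<bar>a\<bar> * x" "x \<ge> 0"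
    using assms by (simp add: field_simps, linarith)
  then have "sqrt \<bar>c\<bar> \<le> \<bar>a * x\<bar>"
    by (simp add: abs_mult)
  then have "\<bar>c\<bar> \<le> (a * x)\<^sup>2"
    by (metis sqrt_le_D power2_abs)
  then show ?case
    by linarith
qed

lemma sqrt_square_plus_const_bigo:
  fixes a c :: real
  assumes a: "a > 0"
  shows "(\<lambda>x. sqrt ((a * x)\<^sup>2 + c) - a * x) \<in> O(\<lambda>x. 1 / x)"
proof (rule bigoI)
  have "a \<noteq> 0"
    using a by simp
  show "eventually (\<lambda>x. norm (sqrt ((a * x)\<^sup>2 + c) - a * x) \<le> \<bar>c\<bar> / a * norm (1 / x)) at_top"
    using eventually_square_plus_const_nonneg[OF \<open>a \<noteq> 0\<close>, of c] eventually_gt_at_top[of 0]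
  proof eventually_elim
    case (elim x)
    define s where "s = sqrt ((a * x)\<^sup>2 + c)"
    have s: "s \<ge> 0" "s\<^sup>2 = (a * x)\<^sup>2 + c"
      using elim by (simp_all add: s_def)
    have ax: "a * x > 0"
      using elim a by simp
    have "(s - a * x) * (s + a * x) = c"
      using s by (simp add: algebra_simps power2_eq_square)
    then have "\<bar>s - a * x\<bar> * (s + a * x) = \<bar>c\<bar>"
      using s ax by (metis abs_mult abs_of_pos add_nonneg_pos)
    moreover have "\<bar>s - a * x\<bar> * (a * x) \<le> \<bar>s - a * x\<bar> * (s + a * x)"
      using s by (intro mult_left_mono) simp_all
    ultimately have "\<bar>s - a * x\<bar> \<le> \<bar>c\<bar> / (a * x)"
      using ax by (simp add: pos_le_divide_eq)
    then show ?case
      using elim by (simp add: s_def)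
  qed
qed

lemma power_powr_divide:
  fixes u :: real
  assumes "0 < u" "0 < n"
  shows "(u ^ n) powr (real m / real n) = u ^ m"
  using assms by (simp add: powr_realpow[symmetric] powr_powr)

definition xi_radicand :: "nat \<Rightarrow> real \<Rightarrow> real \<Rightarrow> real \<Rightarrow> real \<Rightarrow> real \<Rightarrow> real" where
  "xi_radicand D k Om T V Phi =
     1 + real D * (real D - 2) *
       (alpha2 D * Phi\<^sup>2 / (4 * pi\<^sup>2 * T\<^sup>2) - k / (4 * pi\<^sup>2 * T\<^sup>2) * (Om / V) powr (2 / (real D - 1)))"

definition xi_root :: "nat \<Rightarrow> real \<Rightarrow> real \<Rightarrow> real \<Rightarrow> real \<Rightarrow> real \<Rightarrow> real" where
  "xi_root D k Om T V Phi = (1 + sqrt (xi_radicand D k Om T V Phi)) / 2"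

lemma xi_eq_xi_root_power: "xi D k Om T V Phi = xi_root D k Om T V Phi ^ (D - 1)"
  by (simp add: xi_def xi_root_def xi_radicand_def power_divide)

lemma chi_eq_xi_root_power:
  assumes D: "D \<ge> 3" and r: "xi_radicand D k Om T V Phi \<ge> 0"
  defines "u \<equiv> xi_root D k Om T V Phi"
  shows "chi D k Om T V Phi = (real D * u ^ (D - 1) - 2 * u ^ D) / (real D - 2)"
proof -
  define R where "R = alpha2 D * Phi\<^sup>2 / (4 * pi\<^sup>2 * T\<^sup>2)
    - k / (4 * pi\<^sup>2 * T\<^sup>2) * (Om / V) powr (2 / (real D - 1))"
  have sqrt_eq: "sqrt (xi_radicand D k Om T V Phi) = 2 * u - 1"
    by (simp add: u_def xi_root_def field_simps)
  have u: "u > 0"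
    using sqrt_eq r by (smt (verit) real_sqrt_ge_zero)
  have powr1: "xi D k Om T V Phi powr ((real D - 2) / (real D - 1)) = u ^ (D - 2)"
    using power_powr_divide[OF u, of "D - 1" "D - 2"] D
    by (simp add: xi_eq_xi_root_power u_def of_nat_diff)
  have powr2: "xi D k Om T V Phi powr (2 / (real D - 1)) = u\<^sup>2"
    using power_powr_divide[OF u, of "D - 1" 2] D
    by (simp add: xi_eq_xi_root_power u_def of_nat_diff)
  have "1 + real D * (real D - 2) * R = (2 * u - 1)\<^sup>2"
    using r by (simp add: R_def xi_radicand_def flip: sqrt_eq)
  then have R: "R = 4 * (u\<^sup>2 - u) / (real D * (real D - 2))"
    using D by (simp add: field_simps power2_eq_square)
  have "(real D)\<^sup>2 / (16 * pi\<^sup>2 * T\<^sup>2) * (k * (Om / V) powr (2 / (real D - 1)) - alpha2 D * Phi\<^sup>2)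
      = - (real D)\<^sup>2 / 4 * R"
    \<comment> \<open>for T = 0 both sides are 0, as x / 0 = 0\<close>
    by (cases "T = 0") (simp_all add: R_def field_simps)
  also have "\<dots> = - real D * (u\<^sup>2 - u) / (real D - 2)"
    using D by (simp add: R field_simps power2_eq_square)
  finally have bracket: "(real D)\<^sup>2 / (16 * pi\<^sup>2 * T\<^sup>2)
      * (k * (Om / V) powr (2 / (real D - 1)) - alpha2 D * Phi\<^sup>2) = - real D * (u\<^sup>2 - u) / (real D - 2)" .
  have "D = (D - 2) + 2" "D - 1 = (D - 2) + 1"
    using D by simp_all
  then have powers: "u ^ D = u ^ (D - 2) * u\<^sup>2" "u ^ (D - 1) = u ^ (D - 2) * u"
    by (metis power_add, metis power_add power_one_right)
  have "chi D k Om T V Phi = u ^ (D - 2) * (u\<^sup>2 - real D * (u\<^sup>2 - u) / (real D - 2))"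
    unfolding chi_def powr1 powr2 bracket by simp
  also have "\<dots> = (real D * u ^ (D - 1) - 2 * u ^ D) / (real D - 2)"
    unfolding powers using D by (simp add: field_simps power2_eq_square)
  finally show ?thesis .
qed

text \<open>(2 * potential_scale D)^2 is the coefficient of Phi^2 in T^2 * xi_radicand, so
  T * xi_root grows like potential_scale D * Phi.\<close>

definition potential_scale :: "nat \<Rightarrow> real" where
  "potential_scale D = sqrt (real D * (real D - 2) * alpha2 D) / (4 * pi)"

lemma potential_scale_pos: "D \<ge> 3 \<Longrightarrow> potential_scale D > 0"
  by (simp add: potential_scale_def alpha2_def)

lemma potential_scale_filterlim:
  "D \<ge> 3 \<Longrightarrow> filterlim (\<lambda>Phi. potential_scale D * Phi) at_infinity at_top"
  by (intro filterlim_at_top_imp_at_infinity filterlim_tendsto_pos_mult_at_top[OF tendsto_const]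
      potential_scale_pos filterlim_ident)

lemma xi_root_expansion:
  assumes D: "D \<ge> 3" and T: "T > 0"
  defines "a \<equiv> potential_scale D"
  shows "(\<lambda>Phi. (T * xi_root D k Om T V Phi - a * Phi - T / 2) * (a * Phi)) \<in> O(\<lambda>_. 1)"
    and "eventually (\<lambda>Phi. xi_radicand D k Om T V Phi \<ge> 0) at_top"
proof -
  define c where "c = T\<^sup>2 - real D * (real D - 2) * k * (Om / V) powr (2 / (real D - 1)) / (4 * pi\<^sup>2)"
  have a: "2 * a > 0"
    using potential_scale_pos[OF D] by (simp add: a_def)
  have a2: "(2 * a)\<^sup>2 = real D * (real D - 2) * alpha2 D / (4 * pi\<^sup>2)"
    using D by (simp add: a_def potential_scale_def power_divide alpha2_def power_mult_distrib)
  have radicand: "T\<^sup>2 * xi_radicand D k Om T V Phi = (2 * a * Phi)\<^sup>2 + c" for Phi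
  proof -
    have "T\<^sup>2 * xi_radicand D k Om T V Phi = real D * (real D - 2) * alpha2 D / (4 * pi\<^sup>2) * Phi\<^sup>2 + c"
      using T by (simp add: xi_radicand_def c_def field_simps)
    then show ?thesis
      by (metis a2 power_mult_distrib)
  qed
  have root: "T * xi_root D k Om T V Phi = T / 2 + sqrt ((2 * a * Phi)\<^sup>2 + c) / 2" for Phi
  proof -
    have "T * sqrt (xi_radicand D k Om T V Phi) = sqrt ((2 * a * Phi)\<^sup>2 + c)"
      using T by (simp flip: radicand add: real_sqrt_mult)
    then show ?thesis
      by (simp add: xi_root_def field_simps)
  qed
  have "(\<lambda>Phi. (sqrt ((2 * a * Phi)\<^sup>2 + c) - 2 * a * Phi) * Phi) \<in> O(\<lambda>Phi. 1 / Phi * Phi)"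
    using sqrt_square_plus_const_bigo[OF a, of c] by (rule landau_o.big.mult_right)
  also have "(\<lambda>Phi::real. 1 / Phi * Phi) \<in> \<Theta>(\<lambda>_. 1)"
    by (rule bigthetaI_cong) simp
  finally have "(\<lambda>Phi. a / 2 * ((sqrt ((2 * a * Phi)\<^sup>2 + c) - 2 * a * Phi) * Phi)) \<in> O(\<lambda>_. 1)"
    by simp
  moreover have "(T * xi_root D k Om T V Phi - a * Phi - T / 2) * (a * Phi)
      = a / 2 * ((sqrt ((2 * a * Phi)\<^sup>2 + c) - 2 * a * Phi) * Phi)" for Phi
    by (simp add: root algebra_simps)
  ultimately show "(\<lambda>Phi. (T * xi_root D k Om T V Phi - a * Phi - T / 2) * (a * Phi)) \<in> O(\<lambda>_. 1)"
    by (simp only:)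
  from a have "2 * a \<noteq> 0"
    by simp
  from eventually_square_plus_const_nonneg[OF this, of c]
  show "eventually (\<lambda>Phi. xi_radicand D k Om T V Phi \<ge> 0) at_top"
  proof (rule eventually_mono)
    fix Phi
    assume "(2 * a * Phi)\<^sup>2 + c \<ge> 0"
    then have "T\<^sup>2 * xi_radicand D k Om T V Phi \<ge> 0"
      by (simp only: radicand)
    then show "xi_radicand D k Om T V Phi \<ge> 0"
      using T by (simp add: zero_le_mult_iff)
  qed
qed

definition xi_remainder :: "nat \<Rightarrow> real \<Rightarrow> real \<Rightarrow> real \<Rightarrow> real \<Rightarrow> real \<Rightarrow> real" where
  "xi_remainder D k Om T V Phi = T ^ D * xi D k Om T V Phi - T * (potential_scale D * Phi) ^ (D - 1)"

definition chi_remainder :: "nat \<Rightarrow> real \<Rightarrow> real \<Rightarrow> real \<Rightarrow> real \<Rightarrow> real \<Rightarrow> real" where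
  "chi_remainder D k Om T V Phi =
     T ^ D * chi D k Om T V Phi + 2 / (real D - 2) * (potential_scale D * Phi) ^ D"

lemma xi_remainder_bigo:
  assumes D: "D \<ge> 3" and T: "T > 0"
  shows "(\<lambda>Phi. xi_remainder D k Om T V Phi) \<in> O(\<lambda>Phi. Phi ^ (D - 2))"
proof -
  define a where "a = potential_scale D"
  define w where "w Phi = T * xi_root D k Om T V Phi" for Phi
  have D1: "Suc (D - 2) = D - 1"
    using D by simp
  have "(\<lambda>Phi. (a * Phi + T / 2 + (w Phi - a * Phi - T / 2)) ^ Suc (D - 2) - (a * Phi) ^ Suc (D - 2))
      \<in> O(\<lambda>Phi. (a * Phi) ^ (D - 2))"
    using potential_scale_filterlim[OF D] xi_root_expansion(1)[OF D T]
    unfolding a_def w_def by (rule bigo_shifted_power_diff)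
  then have "(\<lambda>Phi. T * (w Phi ^ (D - 1) - (a * Phi) ^ (D - 1))) \<in> O(\<lambda>Phi. (a * Phi) ^ (D - 2))"
    unfolding D1 using T by simp
  moreover have "T ^ D * xi D k Om T V Phi = T * w Phi ^ (D - 1)" for Phi
  proof -
    have "T ^ D = T * T ^ (D - 1)"
      using D by (simp flip: power_Suc)
    then show ?thesis
      by (simp add: xi_eq_xi_root_power w_def power_mult_distrib)
  qed
  ultimately have "(\<lambda>Phi. xi_remainder D k Om T V Phi) \<in> O(\<lambda>Phi. (a * Phi) ^ (D - 2))"
    by (simp add: xi_remainder_def a_def right_diff_distrib)
  then show ?thesis
    using potential_scale_pos[OF D] by (simp add: a_def power_mult_distrib)
qed

lemma chi_remainder_bigo:
  assumes D: "D \<ge> 3" and T: "T > 0"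
  shows "(\<lambda>Phi. chi_remainder D k Om T V Phi) \<in> O(\<lambda>Phi. Phi ^ (D - 2))"
proof -
  define a where "a = potential_scale D"
  define n where "n = D - 2"
  define w where "w Phi = T * xi_root D k Om T V Phi" for Phi
  have n: "D = n + 2" "D - 1 = n + 1"
    using D by (simp_all add: n_def)
  have "(\<lambda>Phi. of_nat (n + 2) * T * (a * Phi + T / 2 + (w Phi - a * Phi - T / 2)) ^ (n + 1)
      - 2 * (a * Phi + T / 2 + (w Phi - a * Phi - T / 2)) ^ (n + 2) + 2 * (a * Phi) ^ (n + 2))
      \<in> O(\<lambda>Phi. (a * Phi) ^ n)"
    using potential_scale_filterlim[OF D] xi_root_expansion(1)[OF D T]
    unfolding a_def w_def by (rule bigo_power_cancellation)
  then have "(\<lambda>Phi. (real D * T * w Phi ^ (D - 1) - 2 * w Phi ^ D + 2 * (a * Phi) ^ D) / (real D - 2))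
      \<in> O(\<lambda>Phi. (a * Phi) ^ (D - 2))"
    using D unfolding n by (simp add: n_def)
  moreover have "eventually (\<lambda>Phi. T ^ D * chi D k Om T V Phi + 2 / (real D - 2) * (a * Phi) ^ D
      = (real D * T * w Phi ^ (D - 1) - 2 * w Phi ^ D + 2 * (a * Phi) ^ D) / (real D - 2)) at_top"
    using xi_root_expansion(2)[OF D T, where k = k and Om = Om and V = V]
  proof (elim eventually_mono)
    fix Phi
    define u where "u = xi_root D k Om T V Phi"
    assume "xi_radicand D k Om T V Phi \<ge> 0"
    then have "T ^ D * chi D k Om T V Phi
        = (real D * (T ^ D * u ^ (D - 1)) - 2 * (T ^ D * u ^ D)) / (real D - 2)"
      using D by (simp add: chi_eq_xi_root_power u_def right_diff_distrib)
    also have "T ^ D * u ^ (D - 1) = T * w Phi ^ (D - 1)"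
      using D by (simp add: w_def u_def power_mult_distrib flip: power_Suc)
    also have "T ^ D * u ^ D = w Phi ^ D"
      by (simp add: w_def u_def power_mult_distrib)
    finally show "T ^ D * chi D k Om T V Phi + 2 / (real D - 2) * (a * Phi) ^ D
      = (real D * T * w Phi ^ (D - 1) - 2 * w Phi ^ D + 2 * (a * Phi) ^ D) / (real D - 2)"
      by (simp add: add_divide_distrib mult.assoc)
  qed
  ultimately have "(\<lambda>Phi. chi_remainder D k Om T V Phi) \<in> O(\<lambda>Phi. (a * Phi) ^ (D - 2))"
    by (simp add: chi_remainder_def a_def landau_o.big.in_cong)
  then show ?thesis
    using potential_scale_pos[OF D] by (simp add: a_def power_mult_distrib)
qed

lemma eta_nonregen_carnot_bigo:
  assumes D: "D \<ge> 3" and Tc: "Tc > 0" and Th: "Th > 0" and V: "V1 \<noteq> V2"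
  shows "(\<lambda>Phi. eta_nonregen D k Om Tc Th V1 V2 Phi - (1 - Tc / Th)) \<in> O(\<lambda>Phi. 1 / Phi)"
proof -
  define K where "K = (V2 - V1) * potential_scale D ^ (D - 1)"
  define f where "f = (real D - 1) / real D"
  define n where "n = D - 2"
  define N where "N Phi = Tc * K * Phi ^ Suc n
    + (V2 * xi_remainder D k Om Tc V2 Phi - V1 * xi_remainder D k Om Tc V1 Phi
       + f * V2 * (chi_remainder D k Om Th V2 Phi - chi_remainder D k Om Tc V2 Phi))" for Phi
  define M where "M Phi = Th * K * Phi ^ Suc n
    + (V2 * xi_remainder D k Om Th V2 Phi - V1 * xi_remainder D k Om Th V1 Phi
       + f * V1 * (chi_remainder D k Om Th V1 Phi - chi_remainder D k Om Tc V1 Phi))" for Phi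
  have "Suc n = D - 1"
    using D by (simp add: n_def)
  then have eta: "eta_nonregen D k Om Tc Th V1 V2 Phi = 1 - N Phi / M Phi" for Phi
    unfolding eta_nonregen_def Let_def N_def M_def K_def f_def xi_remainder_def chi_remainder_def
    by (simp add: algebra_simps power_mult_distrib)
  have "(\<lambda>Phi. N Phi - Tc * K * Phi ^ Suc n) \<in> O(\<lambda>Phi. Phi ^ n)"
    using Tc Th by (auto simp: N_def n_def intro!: sum_in_bigo xi_remainder_bigo chi_remainder_bigo D)
  moreover have "(\<lambda>Phi. M Phi - Th * K * Phi ^ Suc n) \<in> O(\<lambda>Phi. Phi ^ n)"
    using Tc Th by (auto simp: M_def n_def intro!: sum_in_bigo xi_remainder_bigo chi_remainder_bigo D)
  moreover have "K \<noteq> 0"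
    using V potential_scale_pos[OF D] by (simp add: K_def)
  ultimately show ?thesis
    unfolding eta using Th by (intro carnot_deviation_bigo) simp_all
qed

lemma eta_regen_carnot_bigo:
  assumes D: "D \<ge> 3" and Tc: "Tc > 0" and Th: "Th > 0" and V: "V1 \<noteq> V2"
  shows "(\<lambda>Phi. eta_regen D k Om Tc Th V1 V2 Phi - (1 - Tc / Th)) \<in> O(\<lambda>Phi. 1 / Phi)"
proof -
  define K where "K = (V2 - V1) * potential_scale D ^ (D - 1)"
  define f where "f = (real D - 1) / real D"
  define n where "n = D - 2"
  define N where "N Phi = Tc * K * Phi ^ Suc n
    + (V2 * xi_remainder D k Om Tc V2 Phi - V1 * xi_remainder D k Om Tc V1 Phi
       + f * (V2 * (chi_remainder D k Om Th V2 Phi - chi_remainder D k Om Tc V2 Phi)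
              - V1 * (chi_remainder D k Om Th V1 Phi - chi_remainder D k Om Tc V1 Phi)))" for Phi
  define M where "M Phi = Th * K * Phi ^ Suc n
    + (V2 * xi_remainder D k Om Th V2 Phi - V1 * xi_remainder D k Om Th V1 Phi)" for Phi
  have "Suc n = D - 1"
    using D by (simp add: n_def)
  then have eta: "eta_regen D k Om Tc Th V1 V2 Phi = 1 - N Phi / M Phi" for Phi
    unfolding eta_regen_def Let_def N_def M_def K_def f_def xi_remainder_def chi_remainder_def
    by (simp add: algebra_simps power_mult_distrib)
  have "(\<lambda>Phi. N Phi - Tc * K * Phi ^ Suc n) \<in> O(\<lambda>Phi. Phi ^ n)"
    using Tc Th by (auto simp: N_def n_def intro!: sum_in_bigo xi_remainder_bigo chi_remainder_bigo D)
  moreover have "(\<lambda>Phi. M Phi - Th * K * Phi ^ Suc n) \<in> O(\<lambda>Phi. Phi ^ n)"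
    using Th by (auto simp: M_def n_def intro!: sum_in_bigo xi_remainder_bigo D)
  moreover have "K \<noteq> 0"
    using V potential_scale_pos[OF D] by (simp add: K_def)
  ultimately show ?thesis
    unfolding eta using Th by (intro carnot_deviation_bigo) simp_all
qed

theorem mainTheorem3:
  fixes D :: nat and k Om Tc Th V1 V2 :: real
  assumes "D \<ge> 3" and "k \<in> {1, 0, -1}" and "Om > 0"
    and "0 < Tc" and "Tc < Th" and "0 < V1" and "V1 < V2"
  shows "(\<lambda>Phi. eta_nonregen D k Om Tc Th V1 V2 Phi - (1 - Tc / Th)) \<in> O[at_top](\<lambda>Phi. 1 / Phi)
     \<and> (\<lambda>Phi. eta_regen D k Om Tc Th V1 V2 Phi - (1 - Tc / Th)) \<in> O[at_top](\<lambda>Phi. 1 / Phi)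
     \<and> ((\<lambda>Phi. eta_nonregen D k Om Tc Th V1 V2 Phi) \<longlongrightarrow> 1 - Tc / Th) at_top
     \<and> ((\<lambda>Phi. eta_regen D k Om Tc Th V1 V2 Phi) \<longlongrightarrow> 1 - Tc / Th) at_top"
proof -
  have "0 < Th" "V1 \<noteq> V2"
    using assms by simp_all
  note efficiencies = eta_nonregen_carnot_bigo[OF \<open>D \<ge> 3\<close> \<open>0 < Tc\<close> this, of k Om]
    eta_regen_carnot_bigo[OF \<open>D \<ge> 3\<close> \<open>0 < Tc\<close> this, of k Om]
  have "((\<lambda>Phi::real. 1 / Phi) \<longlongrightarrow> 0) at_top"
    by (rule tendsto_divide_0[OF tendsto_const filterlim_at_top_imp_at_infinity[OF filterlim_ident]])
  then have "((\<lambda>Phi. eta_nonregen D k Om Tc Th V1 V2 Phi - (1 - Tc / Th)) \<longlongrightarrow> 0) at_top"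
      "((\<lambda>Phi. eta_regen D k Om Tc Th V1 V2 Phi - (1 - Tc / Th)) \<longlongrightarrow> 0) at_top"
    using efficiencies by (simp_all add: bigo_tendsto_0)
  then show ?thesis
    using efficiencies by (simp add: LIM_zero_iff)
qed

end
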